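(* Let $\alpha\in\mathbb{C}$ with $|\alpha|<1$ and $\phi(z)=\left(\dfrac{z-\alpha}{1-\overline\alpha z}\right)^3$. Then $$\omega_2(S(\phi))=\dfrac{7|\alpha|-|\alpha|^{3}+(1+|\alpha|^{2})(|\alpha|^{2}+8)^{\frac{1}{2}}}{4+2|\alpha|^{2}+2|\alpha|(|\alpha|^{2}+8)^{\frac{1}{2}}}.$$
   Context: $S(\phi)$ is the compression of the unilateral shift $Sf=zf$ on the Hardy space $\mathbb{H}^2$ of the unit disc to the model space $H(\phi)=\mathbb{H}^2\ominus\phi\mathbb{H}^2$: $S(\phi)f=P(zf)$, $P$ the orthogonal projection onto $H(\phi)$. $\omega_2$ is the numerical radius. *)

theory Defs
  imports "HOL-Analysis.Analysis"
begin

text \<open>The Hardy space H^2 of the unit disc, realised (isometrically) via Taylor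
coefficients: f(z) = sum a_n z^n with (a_n) square summable.\<close>

definition H2 :: "(nat \<Rightarrow> complex) set" where
  "H2 = {a. summable (\<lambda>n. (cmod (a n))^2)}"

definition h2_inner :: "(nat \<Rightarrow> complex) \<Rightarrow> (nat \<Rightarrow> complex) \<Rightarrow> complex" where
  "h2_inner a b = (\<Sum>n. a n * cnj (b n))"

definition h2_norm :: "(nat \<Rightarrow> complex) \<Rightarrow> real" where
  "h2_norm a = sqrt (\<Sum>n. (cmod (a n))^2)"

definition taylor_coeff :: "(complex \<Rightarrow> complex) \<Rightarrow> nat \<Rightarrow> complex" where
  "taylor_coeff f n = (deriv ^^ n) f 0 / of_nat (fact n)"

definition mult_by :: "(complex \<Rightarrow> complex) \<Rightarrow> (nat \<Rightarrow> complex) \<Rightarrow> (nat \<Rightarrow> complex)" where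
  "mult_by phi a = (\<lambda>n. \<Sum>k\<le>n. taylor_coeff phi k * a (n - k))"

definition model_space :: "(complex \<Rightarrow> complex) \<Rightarrow> (nat \<Rightarrow> complex) set" where
  "model_space phi = {f \<in> H2. \<forall>g\<in>H2. h2_inner f (mult_by phi g) = 0}"

definition shift :: "(nat \<Rightarrow> complex) \<Rightarrow> (nat \<Rightarrow> complex)" where
  "shift a = (\<lambda>n. case n of 0 \<Rightarrow> 0 | Suc m \<Rightarrow> a m)"

definition orth_proj :: "(nat \<Rightarrow> complex) set \<Rightarrow> (nat \<Rightarrow> complex) \<Rightarrow> (nat \<Rightarrow> complex)" where
  "orth_proj M a = (THE b. b \<in> M \<and> (\<forall>c\<in>M. h2_inner (\<lambda>n. a n - b n) c = 0))"

definition compressed_shift :: "(complex \<Rightarrow> complex) \<Rightarrow> (nat \<Rightarrow> complex) \<Rightarrow> (nat \<Rightarrow> complex)" where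
  "compressed_shift phi f = orth_proj (model_space phi) (shift f)"

definition numerical_radius ::
  "((nat \<Rightarrow> complex) \<Rightarrow> (nat \<Rightarrow> complex)) \<Rightarrow> (nat \<Rightarrow> complex) set \<Rightarrow> real" where
  "numerical_radius T M = Sup {cmod (h2_inner (T f) f) | f. f \<in> M \<and> h2_norm f = 1}"

end

theory Submission
  imports Defs "HOL-Complex_Analysis.Complex_Analysis"
begin

text \<open>
  For \<open>\<phi> = b\<^sup>3\<close> with \<open>b(z) = (z - a) / (1 - cnj a * z)\<close> the model space is three-dimensional:
  testing against \<open>\<phi> * (1 - cnj a * z)\<^sup>3 * z\<^sup>m = (z - a)\<^sup>3 * z\<^sup>m\<close> shows that the Taylor coefficients
  of an element obey a third-order linear recurrence, so it is a combination of the kernels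
  \<open>z\<^sup>j / (1 - cnj a * z)\<^sup>j\<^sup>+\<^sup>1\<close>, \<open>j < 3\<close>; conversely these kernels are orthogonal to \<open>\<phi> H\<^sup>2\<close> because
  \<open>\<phi>\<close> has a triple zero at \<open>a\<close>. The Takenaka basis \<open>sqrt (1 - \<bar>a\<bar>\<^sup>2) * b\<^sup>k / (1 - cnj a * z)\<close>,
  \<open>k < 3\<close>, is orthonormal, and in it \<open>S(\<phi>)\<close> is upper triangular with \<open>a\<close> on the diagonal,
  \<open>1 - \<bar>a\<bar>\<^sup>2\<close> on the superdiagonal and \<open>- cnj a * (1 - \<bar>a\<bar>\<^sup>2)\<close> in the corner.

  Writing \<open>a = r w\<close> with \<open>\<bar>w\<bar> = 1\<close> and replacing \<open>p\<^sub>k\<close> by \<open>p\<^sub>k w\<^sup>k\<close> reduces to \<open>a = r \<ge> 0\<close>. Let \<open>l\<close> be the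
  positive root of \<open>l\<^sup>2 + r l = 2\<close>. For every unit \<open>v\<close>, \<open>(r + (1 - r\<^sup>2) l / 2) \<bar>p\<bar>\<^sup>2 - Re (v \<langle>S(\<phi>) p, p\<rangle>)\<close>
  is a sum of two values of a real quadratic form in three variables, which is positive semidefinite by
  Sylvester's criterion; hence \<open>\<omega>\<^sub>2(S(\<phi>)) \<le> r + (1 - r\<^sup>2) l / 2\<close>, with equality at \<open>p \<sim> (l, 2, l)\<close>. The
  closed form in the statement is this value with the root written out.
\<close>

section \<open>The coefficient space \<open>H\<^sup>2\<close>\<close>

lemma H2_iff: "a \<in> H2 \<longleftrightarrow> summable (\<lambda>n. (cmod (a n))^2)"
  by (simp add: H2_def)

lemma H2_add [intro]:
  assumes "a \<in> H2" "b \<in> H2" shows "(\<lambda>n. a n + b n) \<in> H2"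
proof -
  have bound: "(cmod (a n + b n))^2 \<le> 2 * (cmod (a n))^2 + 2 * (cmod (b n))^2" for n
  proof -
    have "(cmod (a n + b n))^2 \<le> (cmod (a n) + cmod (b n))^2"
      by (rule power_mono[OF norm_triangle_ineq]) simp
    also have "\<dots> \<le> 2 * (cmod (a n))^2 + 2 * (cmod (b n))^2"
      using zero_le_power2[of "cmod (a n) - cmod (b n)"] by (simp add: power2_eq_square algebra_simps)
    finally show ?thesis .
  qed
  have "summable (\<lambda>n. 2 * (cmod (a n))^2 + 2 * (cmod (b n))^2)"
    using assms unfolding H2_iff by (intro summable_add summable_mult)
  then show ?thesis
    unfolding H2_iff by (rule summable_comparison_test'[where N = 0]) (use bound in simp)
qed

lemma H2_cmult [intro]:
  assumes "a \<in> H2" shows "(\<lambda>n. k * a n) \<in> H2"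
  using summable_mult[of "\<lambda>n. (cmod (a n))^2" "(cmod k)^2"] assms
  by (simp add: H2_iff norm_mult power_mult_distrib)

lemma H2_diff [intro]:
  assumes "a \<in> H2" "b \<in> H2" shows "(\<lambda>n. a n - b n) \<in> H2"
  using H2_add[OF assms(1) H2_cmult[OF assms(2), of "-1"]] by simp

lemma summable_h2_inner:
  assumes "a \<in> H2" "b \<in> H2" shows "summable (\<lambda>n. a n * cnj (b n))"
proof -
  have bound: "norm (a n * cnj (b n)) \<le> ((cmod (a n))^2 + (cmod (b n))^2) / 2" for n
    using zero_le_power2[of "cmod (a n) - cmod (b n)"]
    by (simp add: norm_mult power2_eq_square algebra_simps)
  have "summable (\<lambda>n. ((cmod (a n))^2 + (cmod (b n))^2) / 2)"
    using assms unfolding H2_iff by (intro summable_divide summable_add)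
  then have "summable (\<lambda>n. norm (a n * cnj (b n)))"
    by (rule summable_comparison_test'[where N = 0]) (use bound in simp)
  then show ?thesis by (rule summable_norm_cancel)
qed

lemma h2_inner_add_left:
  assumes "a \<in> H2" "b \<in> H2" "c \<in> H2"
  shows "h2_inner (\<lambda>n. a n + b n) c = h2_inner a c + h2_inner b c"
  unfolding h2_inner_def
  using suminf_add[OF summable_h2_inner[OF assms(1,3)] summable_h2_inner[OF assms(2,3)]]
  by (simp add: algebra_simps)

lemma h2_inner_add_right:
  assumes "a \<in> H2" "b \<in> H2" "c \<in> H2"
  shows "h2_inner a (\<lambda>n. b n + c n) = h2_inner a b + h2_inner a c"
  unfolding h2_inner_def
  using suminf_add[OF summable_h2_inner[OF assms(1,2)] summable_h2_inner[OF assms(1,3)]]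
  by (simp add: algebra_simps)

lemma h2_inner_diff_left:
  assumes "a \<in> H2" "b \<in> H2" "c \<in> H2"
  shows "h2_inner (\<lambda>n. a n - b n) c = h2_inner a c - h2_inner b c"
  unfolding h2_inner_def
  using suminf_diff[OF summable_h2_inner[OF assms(1,3)] summable_h2_inner[OF assms(2,3)]]
  by (simp add: algebra_simps)

lemma h2_inner_cmult_left:
  assumes "a \<in> H2" "c \<in> H2"
  shows "h2_inner (\<lambda>n. k * a n) c = k * h2_inner a c"
  unfolding h2_inner_def using suminf_mult[OF summable_h2_inner[OF assms], of k]
  by (simp add: algebra_simps)

lemma h2_inner_cmult_right:
  assumes "a \<in> H2" "c \<in> H2"
  shows "h2_inner a (\<lambda>n. k * c n) = cnj k * h2_inner a c"
  unfolding h2_inner_def using suminf_mult[OF summable_h2_inner[OF assms], of "cnj k"]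
  by (simp add: algebra_simps)

lemma h2_inner_commute:
  assumes "a \<in> H2" "b \<in> H2"
  shows "h2_inner b a = cnj (h2_inner a b)"
proof -
  have "(\<lambda>n. cnj (a n * cnj (b n))) sums cnj (h2_inner a b)"
    unfolding h2_inner_def using summable_h2_inner[OF assms] by (intro sums_cnj[THEN iffD2] summable_sums)
  then show ?thesis unfolding h2_inner_def by (simp add: sums_iff mult.commute)
qed

lemma h2_inner_split_head:
  assumes "a \<in> H2" "b \<in> H2"
  shows "h2_inner a b = a 0 * cnj (b 0) + h2_inner (\<lambda>n. a (Suc n)) (\<lambda>n. b (Suc n))"
  unfolding h2_inner_def using suminf_split_head[OF summable_h2_inner[OF assms]] by simp

lemma H2_shift [intro]: "a \<in> H2 \<Longrightarrow> shift a \<in> H2"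
  unfolding H2_iff using summable_Suc_iff[of "\<lambda>n. (cmod (shift a n))^2"] by (simp add: shift_def)

lemma h2_inner_shift_left:
  assumes "a \<in> H2" "b \<in> H2"
  shows "h2_inner (shift a) b = h2_inner a (\<lambda>n. b (Suc n))"
  using h2_inner_split_head[OF H2_shift[OF assms(1)] assms(2)] by (simp add: shift_def)

lemma h2_inner_self:
  assumes "a \<in> H2"
  shows "h2_inner a a = of_real ((h2_norm a)^2)"
proof -
  have "summable (\<lambda>n. (cmod (a n))^2)" using assms by (simp add: H2_iff)
  then have "h2_inner a a = of_real (\<Sum>n. (cmod (a n))^2)" and "(\<Sum>n. (cmod (a n))^2) \<ge> 0"
    unfolding h2_inner_def by (simp_all add: suminf_of_real suminf_nonneg flip: complex_norm_square)
  then show ?thesis unfolding h2_norm_def by simp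
qed

section \<open>Kernel sequences\<close>

lemma bounded_linear_times_geometric:
  fixes y :: real
  assumes "0 \<le> y" "y < 1"
  obtains B where "\<And>n. real (n + j) * y^n \<le> B"
proof -
  have "(\<lambda>n. of_nat n * y^n) \<longlonglongrightarrow> 0"
    using powser_times_n_limit_0[of y] assms by simp
  then have "Bseq (\<lambda>n. of_nat n * y^n)" by (rule convergent_imp_Bseq[OF convergentI])
  then obtain K where K: "\<And>n. norm (of_nat n * y^n) \<le> K" by (auto simp: Bseq_def)
  have "real (n + j) * y^n \<le> K + real j" for n
  proof -
    have "real j * y^n \<le> real j" using assms by (simp add: mult_left_le power_le_one)
    then show ?thesis using K[of n] assms by (simp add: algebra_simps)
  qed
  then show ?thesis using that by blast
qed

lemma summable_polynomial_times_geometric: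
  fixes x :: real
  assumes "0 \<le> x" "x < 1"
  shows "summable (\<lambda>n. real (n + j) ^ k * x^n)"
  using assms
proof (induction k arbitrary: x)
  case 0
  then show ?case by (simp add: summable_geometric)
next
  case (Suc k)
  \<comment> \<open>Split \<open>x^n = y^n * y^n\<close> with \<open>y = sqrt x\<close>: one factor absorbs the extra \<open>n + j\<close>.\<close>
  define y where "y = sqrt x"
  have y: "0 \<le> y" "y < 1" and yy: "x^n = y^n * y^n" for n
    using Suc.prems by (auto simp: y_def power_mult_distrib[symmetric])
  obtain B where B: "\<And>n. real (n + j) * y^n \<le> B" using bounded_linear_times_geometric[OF y] by blast
  have "summable (\<lambda>n. B * (real (n + j) ^ k * y^n))"
    using Suc.IH[OF y] by (rule summable_mult)
  then show ?case
  proof (rule summable_comparison_test'[where N = 0])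
    fix n
    have "real (n + j) ^ Suc k * x^n = (real (n + j) ^ k * y^n) * (real (n + j) * y^n)"
      unfolding yy by (simp add: algebra_simps)
    also have "\<dots> \<le> (real (n + j) ^ k * y^n) * B"
      by (rule mult_left_mono[OF B]) (use y in simp)
    finally show "norm (real (n + j) ^ Suc k * x^n) \<le> B * (real (n + j) ^ k * y^n)"
      using Suc.prems by (simp add: algebra_simps)
  qed
qed

text \<open>Taylor coefficients of \<open>z^j / (1 - cnj a * z)^(j+1)\<close>.\<close>
definition kernel_seq :: "complex \<Rightarrow> nat \<Rightarrow> nat \<Rightarrow> complex" where
  "kernel_seq a j n = of_nat (n choose j) * cnj a ^ (n - j)"

lemma kernel_seq_0 [simp]: "kernel_seq a 0 n = cnj a ^ n"
  by (simp add: kernel_seq_def)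

lemma kernel_seq_at_0: "kernel_seq a j 0 = (if j = 0 then 1 else 0)"
  by (simp add: kernel_seq_def)

lemma kernel_seq_Suc_Suc:
  "kernel_seq a (Suc j) (Suc n) = cnj a * kernel_seq a (Suc j) n + kernel_seq a j n"
proof (cases "Suc j \<le> n")
  case True
  then have "cnj a ^ (n - j) = cnj a * cnj a ^ (n - Suc j)"
    by (metis Suc_diff_Suc Suc_le_lessD power_Suc)
  then show ?thesis by (simp add: kernel_seq_def algebra_simps)
qed (simp add: kernel_seq_def algebra_simps)

lemma kernel_seq_in_H2:
  assumes "cmod a < 1"
  shows "kernel_seq a j \<in> H2"
proof -
  define x where "x = (cmod a)^2"
  have x: "0 \<le> x" "x < 1" using assms by (auto simp: x_def abs_square_less_1)
  have "summable (\<lambda>n. (cmod (kernel_seq a j (n + j)))^2)"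
  proof (rule summable_comparison_test'[OF summable_polynomial_times_geometric[OF x, of j "2*j"], where N = 0])
    fix n
    have "real ((n + j) choose j) \<le> real (n + j) ^ j"
      by (metis binomial_le_pow le_add2 of_nat_le_iff of_nat_power)
    then have "real ((n + j) choose j) ^ 2 \<le> real (n + j) ^ (2*j)"
      by (metis power_mono power_mult mult.commute of_nat_0_le_iff)
    then have "real ((n + j) choose j) ^ 2 * x^n \<le> real (n + j) ^ (2*j) * x^n"
      by (rule mult_right_mono) (use x in simp)
    then show "norm ((cmod (kernel_seq a j (n + j)))^2) \<le> real (n + j) ^ (2*j) * x^n"
      by (simp add: kernel_seq_def norm_mult norm_power x_def power_mult_distrib mult.commute flip: power_mult)
  qed
  then show ?thesis unfolding H2_iff by (rule summable_iff_shift[THEN iffD1])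
qed

text \<open>Coefficients of \<open>((1 - cnj a * z) F(z) - F(0)) / z\<close>; it lowers \<open>j\<close> in \<open>kernel_seq a j\<close>.\<close>
definition twisted_diff :: "complex \<Rightarrow> (nat \<Rightarrow> complex) \<Rightarrow> nat \<Rightarrow> complex" where
  "twisted_diff a f n = f (Suc n) - cnj a * f n"

lemma twisted_diff_kernel_seq_0: "twisted_diff a (kernel_seq a 0) = (\<lambda>n. 0)"
  by (simp add: twisted_diff_def fun_eq_iff)

lemma twisted_diff_kernel_seq_Suc: "twisted_diff a (kernel_seq a (Suc j)) = kernel_seq a j"
  by (simp add: twisted_diff_def fun_eq_iff kernel_seq_Suc_Suc)

lemma twisted_diff_zero: "twisted_diff a (\<lambda>n. 0) = (\<lambda>n. 0)"
  by (simp add: twisted_diff_def fun_eq_iff)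

lemma twisted_diff_cube:
  "twisted_diff a (twisted_diff a (twisted_diff a f)) m
     = f (m+3) - 3 * cnj a * f (m+2) + 3 * (cnj a)^2 * f (m+1) - (cnj a)^3 * f m"
  by (simp add: twisted_diff_def eval_nat_numeral algebra_simps)

lemma kernel_seq_recurrence:
  assumes "j \<le> 2"
  shows "kernel_seq a j (m+3) - 3 * cnj a * kernel_seq a j (m+2) + 3 * (cnj a)^2 * kernel_seq a j (m+1)
           - (cnj a)^3 * kernel_seq a j m = 0"
proof -
  have "j = 0 \<or> j = Suc 0 \<or> j = Suc (Suc 0)" using assms by auto
  then have "twisted_diff a (twisted_diff a (twisted_diff a (kernel_seq a j))) = (\<lambda>n. 0)"
    by (elim disjE) (simp_all only: twisted_diff_kernel_seq_Suc twisted_diff_kernel_seq_0 twisted_diff_zero)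
  then show ?thesis unfolding twisted_diff_cube[symmetric] by simp
qed

section \<open>The model space of a cubed Blaschke factor\<close>

definition h2_fun :: "(nat \<Rightarrow> complex) \<Rightarrow> complex \<Rightarrow> complex" where
  "h2_fun g z = (\<Sum>n. g n * z^n)"

definition blaschke3 :: "complex \<Rightarrow> complex \<Rightarrow> complex" where
  "blaschke3 a z = ((z - a) / (1 - cnj a * z))^3"

lemma H2_bounded:
  assumes "g \<in> H2"
  obtains K where "\<And>n. cmod (g n) \<le> K"
proof -
  have "(\<lambda>n. (cmod (g n))^2) \<longlonglongrightarrow> 0"
    using assms unfolding H2_iff by (rule summable_LIMSEQ_zero)
  then have "Bseq (\<lambda>n. (cmod (g n))^2)" by (rule convergent_imp_Bseq[OF convergentI])
  then obtain K where K: "\<And>n. norm ((cmod (g n))^2) \<le> K" by (auto simp: Bseq_def)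
  have "cmod (g n) \<le> 1 + K" for n
    using K[of n] zero_le_power2[of "cmod (g n) - 1/2"] by (simp add: power2_eq_square algebra_simps)
  then show ?thesis using that by blast
qed

lemma h2_fun_sums:
  assumes "g \<in> H2" "cmod z < 1"
  shows "(\<lambda>n. g n * z^n) sums h2_fun g z"
proof -
  obtain K where K: "\<And>n. cmod (g n) \<le> K" using H2_bounded[OF assms(1)] by blast
  have "summable (\<lambda>n. K * (cmod z)^n)"
    by (rule summable_mult[OF summable_geometric]) (use assms(2) in simp)
  then have "summable (\<lambda>n. norm (g n * z^n))"
    by (rule summable_comparison_test'[where N = 0])
      (simp add: norm_mult norm_power mult_right_mono[OF K])
  then show ?thesis unfolding h2_fun_def by (simp add: summable_norm_cancel summable_sums)
qed

lemma holomorphic_h2_fun: "g \<in> H2 \<Longrightarrow> h2_fun g holomorphic_on ball 0 1"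
  by (rule power_series_holomorphic[where a = g]) (use h2_fun_sums in auto)

lemma h2_fun_has_fps_expansion:
  assumes "g \<in> H2"
  shows "h2_fun g has_fps_expansion Abs_fps g"
proof (rule has_fps_expansionI)
  show "\<forall>\<^sub>F u in nhds 0. (\<lambda>n. fps_nth (Abs_fps g) n * u ^ n) sums h2_fun g u"
    unfolding eventually_nhds using h2_fun_sums[OF assms]
    by (intro exI[of _ "ball 0 1"]) auto
qed

lemma one_minus_cnj_mult_nonzero:
  assumes "cmod a < 1" "cmod z < 1"
  shows "1 - cnj a * z \<noteq> 0"
proof
  assume "1 - cnj a * z = 0"
  then have "cmod a * cmod z = 1" by (metis complex_mod_cnj eq_iff_diff_eq_0 norm_mult norm_one)
  moreover have "cmod a * cmod z < 1"
    using assms by (metis le_less_trans mult_left_le norm_ge_zero order_less_imp_le)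
  ultimately show False by simp
qed

lemma holomorphic_blaschke3: "cmod a < 1 \<Longrightarrow> blaschke3 a holomorphic_on ball 0 1"
  unfolding blaschke3_def by (intro holomorphic_intros) (use one_minus_cnj_mult_nonzero in auto)

lemma blaschke3_has_fps_expansion:
  "cmod a < 1 \<Longrightarrow> blaschke3 a has_fps_expansion fps_expansion (blaschke3 a) 0"
  by (rule has_fps_expansion_fps_expansion[OF open_ball _ holomorphic_blaschke3]) simp_all

lemma mult_by_blaschke3_fps:
  assumes "cmod a < 1"
  shows "mult_by (blaschke3 a) g = fps_nth (fps_expansion (blaschke3 a) 0 * Abs_fps g)"
  using fps_nth_fps_expansion[OF blaschke3_has_fps_expansion[OF assms]]
  by (simp add: fun_eq_iff mult_by_def taylor_coeff_def fps_mult_nth atLeast0AtMost)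

lemma mult_by_blaschke3_higher_deriv:
  assumes "cmod a < 1" "g \<in> H2"
  shows "mult_by (blaschke3 a) g n = (deriv ^^ n) (\<lambda>z. blaschke3 a z * h2_fun g z) 0 / fact n"
  unfolding mult_by_blaschke3_fps[OF assms(1)]
  by (rule fps_nth_fps_expansion[OF has_fps_expansion_mult[OF
        blaschke3_has_fps_expansion[OF assms(1)] h2_fun_has_fps_expansion[OF assms(2)]]])

lemma higher_deriv_taylor_sums:
  assumes "H holomorphic_on ball 0 1" "cmod w < 1"
  shows "(\<lambda>m. (deriv ^^ (m + j)) H 0 / fact m * w^m) sums (deriv ^^ j) H w"
proof -
  have "(deriv ^^ j) H holomorphic_on ball 0 1"
    by (rule holomorphic_higher_deriv[OF assms(1) open_ball])
  from holomorphic_power_series[OF this, of w] assms(2) show ?thesis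
    by (simp add: funpow_add)
qed

lemma higher_deriv_blaschke3_mult_vanish:
  assumes a: "cmod a < 1" and g: "g \<in> H2" and j: "j \<le> 2"
  shows "(deriv ^^ j) (\<lambda>z. blaschke3 a z * h2_fun g z) a = 0"
proof -
  define K where "K = (\<lambda>z. h2_fun g z / (1 - cnj a * z)^3)"
  have "(\<lambda>z. blaschke3 a z * h2_fun g z) = (\<lambda>z. (z - a)^3 * K z)"
    by (simp add: fun_eq_iff blaschke3_def K_def power_divide)
  moreover have "K holomorphic_on ball 0 1"
    unfolding K_def using one_minus_cnj_mult_nonzero[OF a]
    by (intro holomorphic_intros holomorphic_h2_fun[OF g]) auto
  then have "(deriv ^^ j) (\<lambda>z. (z - a)^3 * K z) a
      = (\<Sum>i = 0..j. of_nat (j choose i) * (deriv ^^ i) (\<lambda>z. (z - a)^3) a * (deriv ^^ (j - i)) K a)"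
    using a by (intro higher_deriv_mult) (auto intro!: holomorphic_intros)
  moreover have "(deriv ^^ i) (\<lambda>z. (z - a)^3) a = 0" if "i \<le> j" for i
    using that j by (simp add: higher_deriv_power)
  ultimately show ?thesis by simp
qed

text \<open>The sum below is \<open>cnj (H\<^sup>(\<^sup>j\<^sup>)(a)) / j!\<close> for \<open>H = blaschke3 a * h2_fun g\<close>, which vanishes
  because \<open>blaschke3 a\<close> has a triple zero at \<open>a\<close>.\<close>
lemma kernel_seq_orthogonal_mult_by:
  assumes a: "cmod a < 1" and g: "g \<in> H2" and j: "j \<le> 2"
  shows "(\<lambda>n. kernel_seq a j n * cnj (mult_by (blaschke3 a) g n)) sums 0"
proof -
  define H where "H = (\<lambda>z. blaschke3 a z * h2_fun g z)"
  define h where "h = mult_by (blaschke3 a) g"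
  have hH: "h n = (deriv ^^ n) H 0 / fact n" for n
    unfolding h_def H_def by (rule mult_by_blaschke3_higher_deriv[OF a g])
  have "H holomorphic_on ball 0 1"
    unfolding H_def by (intro holomorphic_intros holomorphic_blaschke3[OF a] holomorphic_h2_fun[OF g])
  then have "(\<lambda>m. (deriv ^^ (m + j)) H 0 / fact m * a^m) sums 0"
    using higher_deriv_taylor_sums[of H a j] higher_deriv_blaschke3_mult_vanish[OF a g j] a
    unfolding H_def by simp
  moreover have "(deriv ^^ (m + j)) H 0 / fact m * a^m = fact j * (cnj (kernel_seq a j (m + j)) * h (m + j))" for m
  proof -
    have "(of_nat ((m + j) choose j) :: complex) = fact (m + j) / (fact j * fact m)"
      using binomial_fact[of j "m + j"] by simp
    then show ?thesis by (simp add: hH kernel_seq_def field_simps)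
  qed
  ultimately have "(\<lambda>m. fact j * (cnj (kernel_seq a j (m + j)) * h (m + j))) sums 0" by simp
  then have "(\<lambda>m. cnj (kernel_seq a j (m + j)) * h (m + j)) sums (0 / fact j)"
    by (rule sums_mult_D) simp
  moreover have "\<And>i. i < j \<Longrightarrow> cnj (kernel_seq a j i) * h i = 0"
    by (simp add: kernel_seq_def)
  ultimately have "(\<lambda>n. cnj (kernel_seq a j n) * h n) sums 0"
    using sums_zero_iff_shift[of j "\<lambda>n. cnj (kernel_seq a j n) * h n" 0] by simp
  then have "(\<lambda>n. cnj (cnj (kernel_seq a j n) * h n)) sums cnj 0" by (simp only: sums_cnj)
  then show ?thesis unfolding h_def by (simp add: mult.commute)
qed

text \<open>Coefficients of \<open>(1 - cnj a * z)^3 * z^m\<close> and of \<open>(z - a)^3 * z^m = blaschke3 a z * (1 - cnj a * z)^3 * z^m\<close>.\<close>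
definition denom_monomial :: "complex \<Rightarrow> nat \<Rightarrow> nat \<Rightarrow> complex" where
  "denom_monomial a m n =
     (if n = m then 1 else if n = m + 1 then - 3 * cnj a else if n = m + 2 then 3 * (cnj a)^2
      else if n = m + 3 then - ((cnj a)^3) else 0)"

definition numer_monomial :: "complex \<Rightarrow> nat \<Rightarrow> nat \<Rightarrow> complex" where
  "numer_monomial a m n =
     (if n = m then - (a^3) else if n = m + 1 then 3 * a^2 else if n = m + 2 then - 3 * a
      else if n = m + 3 then 1 else 0)"

lemma denom_monomial_sums: "(\<lambda>n. denom_monomial a m n * u^n) sums ((1 - cnj a * u)^3 * u^m)"
proof -
  have "(\<lambda>n. denom_monomial a m n * u^n) sums (\<Sum>n\<in>{m, m+1, m+2, m+3}. denom_monomial a m n * u^n)"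
    by (rule sums_finite) (auto simp: denom_monomial_def)
  also have "(\<Sum>n\<in>{m, m+1, m+2, m+3}. denom_monomial a m n * u^n) = (1 - cnj a * u)^3 * u^m"
    by (simp add: denom_monomial_def algebra_simps eval_nat_numeral)
  finally show ?thesis .
qed

lemma numer_monomial_sums: "(\<lambda>n. numer_monomial a m n * u^n) sums ((u - a)^3 * u^m)"
proof -
  have "(\<lambda>n. numer_monomial a m n * u^n) sums (\<Sum>n\<in>{m, m+1, m+2, m+3}. numer_monomial a m n * u^n)"
    by (rule sums_finite) (auto simp: numer_monomial_def)
  also have "(\<Sum>n\<in>{m, m+1, m+2, m+3}. numer_monomial a m n * u^n) = (u - a)^3 * u^m"
    by (simp add: numer_monomial_def algebra_simps eval_nat_numeral)
  finally show ?thesis .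
qed

lemma denom_monomial_in_H2: "denom_monomial a m \<in> H2"
  unfolding H2_iff by (rule summable_finite[of "{m, m+1, m+2, m+3}"]) (auto simp: denom_monomial_def)

lemma mult_by_blaschke3_denom_monomial:
  assumes a: "cmod a < 1"
  shows "mult_by (blaschke3 a) (denom_monomial a m) = numer_monomial a m"
proof -
  have "(\<lambda>u. (1 - cnj a * u)^3 * u^m) has_fps_expansion Abs_fps (denom_monomial a m)"
    by (rule has_fps_expansionI) (use denom_monomial_sums in simp)
  from has_fps_expansion_mult[OF blaschke3_has_fps_expansion[OF a] this]
  have prod: "(\<lambda>u. blaschke3 a u * ((1 - cnj a * u)^3 * u^m))
                has_fps_expansion fps_expansion (blaschke3 a) 0 * Abs_fps (denom_monomial a m)" .
  have ev: "eventually (\<lambda>u. blaschke3 a u * ((1 - cnj a * u)^3 * u^m) = (u - a)^3 * u^m) (nhds 0)"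
    unfolding eventually_nhds using one_minus_cnj_mult_nonzero[OF a]
    by (intro exI[of _ "ball 0 1"]) (auto simp: blaschke3_def power_divide field_simps)
  then have "(\<lambda>u. (u - a)^3 * u^m)
                    has_fps_expansion fps_expansion (blaschke3 a) 0 * Abs_fps (denom_monomial a m)"
    using has_fps_expansion_cong[OF ev refl] prod by simp
  moreover have "(\<lambda>u. (u - a)^3 * u^m) has_fps_expansion Abs_fps (numer_monomial a m)"
    by (rule has_fps_expansionI) (use numer_monomial_sums in simp)
  ultimately have "fps_expansion (blaschke3 a) 0 * Abs_fps (denom_monomial a m) = Abs_fps (numer_monomial a m)"
    by (rule fps_expansion_unique_complex)
  then show ?thesis by (intro ext) (simp add: mult_by_blaschke3_fps[OF a])
qed

lemma h2_inner_numer_monomial: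
  "h2_inner f (numer_monomial a m)
     = f (m+3) - 3 * cnj a * f (m+2) + 3 * (cnj a)^2 * f (m+1) - (cnj a)^3 * f m"
proof -
  have "h2_inner f (numer_monomial a m) = (\<Sum>n\<in>{m, m+1, m+2, m+3}. f n * cnj (numer_monomial a m n))"
    unfolding h2_inner_def by (rule suminf_finite) (auto simp: numer_monomial_def)
  also have "\<dots> = f (m+3) - 3 * cnj a * f (m+2) + 3 * (cnj a)^2 * f (m+1) - (cnj a)^3 * f m"
    by (simp add: numer_monomial_def algebra_simps eval_nat_numeral)
  finally show ?thesis .
qed

lemma model_space_blaschke3_recurrence:
  assumes "cmod a < 1" "f \<in> model_space (blaschke3 a)"
  shows "f (m+3) = 3 * cnj a * f (m+2) - 3 * (cnj a)^2 * f (m+1) + (cnj a)^3 * f m"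
proof -
  have "h2_inner f (mult_by (blaschke3 a) (denom_monomial a m)) = 0"
    using assms(2) denom_monomial_in_H2 unfolding model_space_def by blast
  then show ?thesis
    unfolding mult_by_blaschke3_denom_monomial[OF assms(1)] h2_inner_numer_monomial
    by (simp add: algebra_simps)
qed

lemma model_space_blaschke3_kernel_span:
  assumes a: "cmod a < 1" and f: "f \<in> model_space (blaschke3 a)"
  obtains d0 d1 d2 where "\<And>n. f n = d0 * kernel_seq a 0 n + d1 * kernel_seq a 1 n + d2 * kernel_seq a 2 n"
proof -
  define d0 where "d0 = f 0"
  define d1 where "d1 = f 1 - cnj a * f 0"
  define d2 where "d2 = f 2 - 2 * cnj a * f 1 + (cnj a)^2 * f 0"
  define g where "g n = d0 * kernel_seq a 0 n + d1 * kernel_seq a 1 n + d2 * kernel_seq a 2 n" for n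
  let ?rec = "\<lambda>h m. h (m+3) - 3 * cnj a * h (m+2) + 3 * (cnj a)^2 * h (m+1) - (cnj a)^3 * h m"
  have "?rec g m = 0" for m
  proof -
    have "?rec g m = d0 * ?rec (kernel_seq a 0) m + d1 * ?rec (kernel_seq a 1) m + d2 * ?rec (kernel_seq a 2) m"
      unfolding g_def by (simp add: algebra_simps)
    also have "\<dots> = 0"
      using kernel_seq_recurrence[of 0 a m] kernel_seq_recurrence[of 1 a m] kernel_seq_recurrence[of 2 a m]
      by simp
    finally show ?thesis .
  qed
  then have g_rec: "g (m+3) = 3 * cnj a * g (m+2) - 3 * (cnj a)^2 * g (m+1) + (cnj a)^3 * g m" for m
    by (simp add: algebra_simps)
  have "f n = g n" for n
  proof (induction n rule: less_induct)
    case (less n)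
    show ?case
    proof (cases "n < 3")
      case True
      then have "n = 0 \<or> n = 1 \<or> n = 2" by auto
      then show ?thesis by (auto simp: g_def d0_def d1_def d2_def kernel_seq_def binomial_eq_0 algebra_simps power2_eq_square)
    next
      case False
      then obtain m where "n = m + 3" by (metis add.commute le_Suc_ex not_less)
      then show ?thesis
        using less[of m] less[of "m+1"] less[of "m+2"]
          model_space_blaschke3_recurrence[OF a f, of m] g_rec[of m] by simp
    qed
  qed
  then show ?thesis using that unfolding g_def by blast
qed

section \<open>The Takenaka basis and the matrix of \<open>S(\<phi>)\<close>\<close>

lemma H2_lincomb3 [intro]:
  assumes "u1 \<in> H2" "u2 \<in> H2" "u3 \<in> H2"
  shows "(\<lambda>n. p1 * u1 n + p2 * u2 n + p3 * u3 n) \<in> H2"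
  using assms by (intro H2_add H2_cmult)

lemma h2_inner_lincomb3_left:
  assumes "u1 \<in> H2" "u2 \<in> H2" "u3 \<in> H2" "w \<in> H2"
  shows "h2_inner (\<lambda>n. p1 * u1 n + p2 * u2 n + p3 * u3 n) w
       = p1 * h2_inner u1 w + p2 * h2_inner u2 w + p3 * h2_inner u3 w"
proof -
  have "(\<lambda>n. p1 * u1 n) \<in> H2" "(\<lambda>n. p2 * u2 n) \<in> H2" "(\<lambda>n. p3 * u3 n) \<in> H2"
    using assms by auto
  with assms show ?thesis
    by (simp add: h2_inner_add_left[of "\<lambda>n. p1 * u1 n + p2 * u2 n"] h2_inner_add_left H2_add
        h2_inner_cmult_left)
qed

lemma h2_inner_lincomb3_right:
  assumes "u1 \<in> H2" "u2 \<in> H2" "u3 \<in> H2" "w \<in> H2"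
  shows "h2_inner w (\<lambda>n. p1 * u1 n + p2 * u2 n + p3 * u3 n)
       = cnj p1 * h2_inner w u1 + cnj p2 * h2_inner w u2 + cnj p3 * h2_inner w u3"
proof -
  have "h2_inner w (\<lambda>n. p1 * u1 n + p2 * u2 n + p3 * u3 n)
      = cnj (p1 * h2_inner u1 w + p2 * h2_inner u2 w + p3 * h2_inner u3 w)"
    using assms by (simp only: h2_inner_commute[OF H2_lincomb3] h2_inner_lincomb3_left)
  then show ?thesis
    using h2_inner_commute[OF assms(1,4)] h2_inner_commute[OF assms(2,4)] h2_inner_commute[OF assms(3,4)]
    by simp
qed

text \<open>Expanding \<open>\<langle>u, v\<rangle> = u 0 * cnj (v 0) + \<langle>u \<circ> Suc, v \<circ> Suc\<rangle>\<close> along the recurrences yields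
  an equation for \<open>\<langle>u, v\<rangle>\<close>, so inner products of such sequences are computed without summing series.\<close>
lemma h2_inner_of_recurrences:
  assumes H: "u \<in> H2" "v \<in> H2" "x \<in> H2" "y \<in> H2"
    and ru: "\<And>n. u (Suc n) = cnj a * u n + x n" and rv: "\<And>n. v (Suc n) = cnj a * v n + y n"
  shows "of_real (1 - (cmod a)^2) * h2_inner u v
     = u 0 * cnj (v 0) + cnj a * h2_inner u y + a * h2_inner x v + h2_inner x y"
proof -
  have Hs: "(\<lambda>n. cnj a * u n) \<in> H2" "(\<lambda>n. cnj a * v n) \<in> H2" using H by auto
  have "h2_inner u v = u 0 * cnj (v 0) + h2_inner (\<lambda>n. cnj a * u n + x n) (\<lambda>n. cnj a * v n + y n)"
    using h2_inner_split_head[OF H(1,2)] ru rv by presburger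
  also have "h2_inner (\<lambda>n. cnj a * u n + x n) (\<lambda>n. cnj a * v n + y n)
      = h2_inner (\<lambda>n. cnj a * u n) (\<lambda>n. cnj a * v n + y n) + h2_inner x (\<lambda>n. cnj a * v n + y n)"
    by (rule h2_inner_add_left) (use H Hs in auto)
  also have "h2_inner (\<lambda>n. cnj a * u n) (\<lambda>n. cnj a * v n + y n)
      = h2_inner (\<lambda>n. cnj a * u n) (\<lambda>n. cnj a * v n) + h2_inner (\<lambda>n. cnj a * u n) y"
    by (rule h2_inner_add_right) (use H Hs in auto)
  also have "h2_inner x (\<lambda>n. cnj a * v n + y n) = h2_inner x (\<lambda>n. cnj a * v n) + h2_inner x y"
    by (rule h2_inner_add_right) (use H Hs in auto)
  also have "h2_inner (\<lambda>n. cnj a * u n) (\<lambda>n. cnj a * v n) = cnj a * a * h2_inner u v"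
    using h2_inner_cmult_left[OF H(1) Hs(2), of "cnj a"] h2_inner_cmult_right[OF H(1,2), of "cnj a"] by simp
  also have "h2_inner (\<lambda>n. cnj a * u n) y = cnj a * h2_inner u y"
    by (rule h2_inner_cmult_left[OF H(1,4)])
  also have "h2_inner x (\<lambda>n. cnj a * v n) = a * h2_inner x v"
    using h2_inner_cmult_right[OF H(3,2), of "cnj a"] by simp
  also have "cnj a * a = of_real ((cmod a)^2)"
    by (simp only: complex_norm_square mult.commute)
  finally show ?thesis unfolding of_real_diff of_real_1 by algebra
qed

definition delta :: "complex \<Rightarrow> complex" where
  "delta a = of_real (1 - (cmod a)^2)"

definition sqrt_delta :: "complex \<Rightarrow> complex" where
  "sqrt_delta a = of_real (sqrt (1 - (cmod a)^2))"

text \<open>\<open>tm1\<close>, \<open>tm2\<close>, \<open>tm3\<close> are the coefficients of the Takenaka basis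
  \<open>sqrt (1 - \<bar>a\<bar>\<^sup>2) * b(z)^k / (1 - cnj a * z)\<close>, \<open>k = 0, 1, 2\<close>, of \<open>H(b\<^sup>3)\<close>,
  where \<open>b(z) = (z - a) / (1 - cnj a * z)\<close>.\<close>
definition tm1 :: "complex \<Rightarrow> nat \<Rightarrow> complex" where
  "tm1 a n = sqrt_delta a * kernel_seq a 0 n"

definition tm2 :: "complex \<Rightarrow> nat \<Rightarrow> complex" where
  "tm2 a n = sqrt_delta a * (delta a * kernel_seq a 1 n - a * kernel_seq a 0 n)"

definition tm3 :: "complex \<Rightarrow> nat \<Rightarrow> complex" where
  "tm3 a n = sqrt_delta a * ((delta a)^2 * kernel_seq a 2 n - 2 * a * delta a * kernel_seq a 1 n
                             + a^2 * kernel_seq a 0 n)"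

lemma delta_cnj [simp]: "cnj (delta a) = delta a"
  by (simp add: delta_def)

lemma sqrt_delta_cnj [simp]: "cnj (sqrt_delta a) = sqrt_delta a"
  by (simp add: sqrt_delta_def)

lemma mult_cnj_eq_one_minus_delta: "a * cnj a = 1 - delta a"
  using complex_norm_square[of a] by (simp add: delta_def)

lemma tm_Suc:
  "tm1 a (Suc n) = cnj a * tm1 a n"
  "tm2 a (Suc n) = cnj a * tm2 a n + delta a * tm1 a n"
  "tm3 a (Suc n) = cnj a * tm3 a n + (delta a * tm2 a n - a * delta a * tm1 a n)"
  by (simp_all add: tm1_def tm2_def tm3_def kernel_seq_Suc_Suc[of a 0, simplified]
      kernel_seq_Suc_Suc[of a 1, simplified] numeral_2_eq_2 algebra_simps)

lemma tm_at_0: "tm1 a 0 = sqrt_delta a" "tm2 a 0 = - sqrt_delta a * a" "tm3 a 0 = sqrt_delta a * a^2"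
  by (simp_all add: tm1_def tm2_def tm3_def kernel_seq_at_0)

context
  fixes a :: complex
  assumes a: "cmod a < 1"
begin

lemma tm_in_H2 [simp]: "tm1 a \<in> H2" "tm2 a \<in> H2" "tm3 a \<in> H2"
  using kernel_seq_in_H2[OF a, of 0] kernel_seq_in_H2[OF a, of 1] kernel_seq_in_H2[OF a, of 2]
  unfolding tm1_def[abs_def] tm2_def[abs_def] tm3_def[abs_def]
  by (auto simp del: kernel_seq_0 intro!: H2_cmult H2_add H2_diff)

lemma one_minus_norm_sq_pos: "1 - (cmod a)^2 > 0"
  using a by (simp add: abs_square_less_1)

lemma sqrt_delta_sq: "sqrt_delta a * sqrt_delta a = delta a"
  using one_minus_norm_sq_pos unfolding sqrt_delta_def delta_def
  by (simp flip: of_real_mult)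

lemma delta_nonzero: "delta a \<noteq> 0"
  using one_minus_norm_sq_pos unfolding delta_def by (metis less_irrefl of_real_eq_0_iff)

lemma sqrt_delta_nonzero: "sqrt_delta a \<noteq> 0"
  using one_minus_norm_sq_pos unfolding sqrt_delta_def by (metis less_irrefl of_real_eq_0_iff real_sqrt_eq_zero_cancel_iff)

definition tm_comb :: "complex \<Rightarrow> complex \<Rightarrow> complex \<Rightarrow> nat \<Rightarrow> complex" where
  "tm_comb p1 p2 p3 = (\<lambda>n. p1 * tm1 a n + p2 * tm2 a n + p3 * tm3 a n)"

lemma tm_comb_in_H2 [simp]: "tm_comb p1 p2 p3 \<in> H2"
  unfolding tm_comb_def by (rule H2_lincomb3) simp_all

lemma h2_inner_tm_comb_left: "w \<in> H2 \<Longrightarrow> h2_inner (tm_comb p1 p2 p3) w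
   = p1 * h2_inner (tm1 a) w + p2 * h2_inner (tm2 a) w + p3 * h2_inner (tm3 a) w"
  unfolding tm_comb_def by (rule h2_inner_lincomb3_left) simp_all

lemma h2_inner_tm_comb_right: "w \<in> H2 \<Longrightarrow> h2_inner w (tm_comb p1 p2 p3)
   = cnj p1 * h2_inner w (tm1 a) + cnj p2 * h2_inner w (tm2 a) + cnj p3 * h2_inner w (tm3 a)"
  unfolding tm_comb_def by (rule h2_inner_lincomb3_right) simp_all

lemma tm_Suc_tm_comb:
  "tm1 a (Suc n) = cnj a * tm1 a n + tm_comb 0 0 0 n"
  "tm2 a (Suc n) = cnj a * tm2 a n + tm_comb (delta a) 0 0 n"
  "tm3 a (Suc n) = cnj a * tm3 a n + tm_comb (- (a * delta a)) (delta a) 0 n"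
  by (simp_all add: tm_comb_def tm_Suc)

lemmas gram_recurrence = h2_inner_of_recurrences[where a = a, folded delta_def,
    OF _ _ tm_comb_in_H2 tm_comb_in_H2]

lemmas gram_simps = tm_at_0 h2_inner_tm_comb_left h2_inner_tm_comb_right

lemma tm_inner_11: "h2_inner (tm1 a) (tm1 a) = 1"
proof -
  have "delta a * h2_inner (tm1 a) (tm1 a) = delta a * 1"
    using gram_recurrence[OF tm_in_H2(1) tm_in_H2(1) tm_Suc_tm_comb(1) tm_Suc_tm_comb(1)]
    by (simp add: gram_simps sqrt_delta_sq)
  then show ?thesis using delta_nonzero by simp
qed

lemma tm_inner_12: "h2_inner (tm1 a) (tm2 a) = 0"
proof -
  have "delta a * h2_inner (tm1 a) (tm2 a) = 0"
    using gram_recurrence[OF tm_in_H2(1) tm_in_H2(2) tm_Suc_tm_comb(1) tm_Suc_tm_comb(2)]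
    by (simp add: gram_simps sqrt_delta_sq tm_inner_11 algebra_simps)
  then show ?thesis using delta_nonzero by simp
qed

lemma tm_inner_13: "h2_inner (tm1 a) (tm3 a) = 0"
proof -
  have "delta a * h2_inner (tm1 a) (tm3 a) = 0"
    using gram_recurrence[OF tm_in_H2(1) tm_in_H2(3) tm_Suc_tm_comb(1) tm_Suc_tm_comb(3)]
    by (simp add: gram_simps tm_inner_11 tm_inner_12 del: mult_eq_0_iff)
      (use mult_cnj_eq_one_minus_delta[of a] sqrt_delta_sq in algebra)
  then show ?thesis using delta_nonzero by simp
qed

lemma tm_inner_22: "h2_inner (tm2 a) (tm2 a) = 1"
proof -
  have "delta a * h2_inner (tm2 a) (tm2 a) = delta a * 1"
    using gram_recurrence[OF tm_in_H2(2) tm_in_H2(2) tm_Suc_tm_comb(2) tm_Suc_tm_comb(2)]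
      h2_inner_commute[of "tm1 a" "tm2 a"]
    by (simp add: gram_simps tm_inner_11 tm_inner_12 del: mult_eq_0_iff)
      (use mult_cnj_eq_one_minus_delta[of a] sqrt_delta_sq in algebra)
  then show ?thesis using delta_nonzero by simp
qed

lemma tm_inner_23: "h2_inner (tm2 a) (tm3 a) = 0"
proof -
  have "delta a * h2_inner (tm2 a) (tm3 a) = 0"
    using gram_recurrence[OF tm_in_H2(2) tm_in_H2(3) tm_Suc_tm_comb(2) tm_Suc_tm_comb(3)]
      h2_inner_commute[of "tm1 a" "tm2 a"]
    by (simp add: gram_simps tm_inner_11 tm_inner_12 tm_inner_13 tm_inner_22 del: mult_eq_0_iff)
      (use mult_cnj_eq_one_minus_delta[of a] sqrt_delta_sq in algebra)
  then show ?thesis using delta_nonzero by simp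
qed

lemma tm_inner_33: "h2_inner (tm3 a) (tm3 a) = 1"
proof -
  have "delta a * h2_inner (tm3 a) (tm3 a) = delta a * 1"
    using gram_recurrence[OF tm_in_H2(3) tm_in_H2(3) tm_Suc_tm_comb(3) tm_Suc_tm_comb(3)]
      h2_inner_commute[of "tm1 a" "tm2 a"] h2_inner_commute[of "tm1 a" "tm3 a"]
      h2_inner_commute[of "tm2 a" "tm3 a"]
    by (simp add: gram_simps tm_inner_11 tm_inner_12 tm_inner_13 tm_inner_22 tm_inner_23 del: mult_eq_0_iff)
      (use mult_cnj_eq_one_minus_delta[of a] sqrt_delta_sq in algebra)
  then show ?thesis using delta_nonzero by simp
qed

lemma h2_inner_tm_comb:
  "h2_inner (tm_comb p1 p2 p3) (tm_comb q1 q2 q3) = p1 * cnj q1 + p2 * cnj q2 + p3 * cnj q3"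
  using h2_inner_commute[of "tm1 a" "tm2 a"] h2_inner_commute[of "tm1 a" "tm3 a"]
    h2_inner_commute[of "tm2 a" "tm3 a"]
  by (simp add: h2_inner_tm_comb_left h2_inner_tm_comb_right tm_inner_11 tm_inner_12 tm_inner_13
      tm_inner_22 tm_inner_23 tm_inner_33 algebra_simps)

lemma h2_inner_shift_tm_comb:
  "h2_inner (shift (tm_comb p1 p2 p3)) (tm_comb q1 q2 q3)
     = p1 * cnj (cnj a * q1 + delta a * q2 - a * delta a * q3) + p2 * cnj (cnj a * q2 + delta a * q3)
       + p3 * cnj (cnj a * q3)"
proof -
  have "(\<lambda>n. tm_comb q1 q2 q3 (Suc n))
          = tm_comb (cnj a * q1 + delta a * q2 - a * delta a * q3) (cnj a * q2 + delta a * q3) (cnj a * q3)"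
    by (simp add: fun_eq_iff tm_comb_def tm_Suc algebra_simps)
  then show ?thesis by (simp add: h2_inner_shift_left h2_inner_tm_comb)
qed

lemma tm_comb_kernel_seq:
  "tm_comb p1 p2 p3 n = sqrt_delta a * (p1 - a * p2 + a^2 * p3) * kernel_seq a 0 n
    + sqrt_delta a * (delta a * p2 - 2 * a * delta a * p3) * kernel_seq a 1 n
    + sqrt_delta a * (delta a)^2 * p3 * kernel_seq a 2 n"
  by (simp add: tm_comb_def tm1_def tm2_def tm3_def algebra_simps power2_eq_square del: kernel_seq_0)

lemma tm_comb_in_model_space: "tm_comb p1 p2 p3 \<in> model_space (blaschke3 a)"
  unfolding model_space_def
proof (intro CollectI conjI ballI tm_comb_in_H2)
  fix g assume g: "g \<in> H2"
  define h where "h = mult_by (blaschke3 a) g"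
  define d0 where "d0 = sqrt_delta a * (p1 - a * p2 + a^2 * p3)"
  define d1 where "d1 = sqrt_delta a * (delta a * p2 - 2 * a * delta a * p3)"
  define d2 where "d2 = sqrt_delta a * (delta a)^2 * p3"
  have "(\<lambda>n. d0 * (kernel_seq a 0 n * cnj (h n)) + d1 * (kernel_seq a 1 n * cnj (h n))
                  + d2 * (kernel_seq a 2 n * cnj (h n))) sums (d0 * 0 + d1 * 0 + d2 * 0)"
    using kernel_seq_orthogonal_mult_by[OF a g, of 0] kernel_seq_orthogonal_mult_by[OF a g, of 1]
      kernel_seq_orthogonal_mult_by[OF a g, of 2]
    unfolding h_def by (intro sums_add sums_mult) (simp_all del: kernel_seq_0)
  then have "(\<lambda>n. tm_comb p1 p2 p3 n * cnj (h n)) sums 0"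
    by (simp add: tm_comb_kernel_seq d0_def d1_def d2_def algebra_simps del: kernel_seq_0)
  then show "h2_inner (tm_comb p1 p2 p3) (mult_by (blaschke3 a) g) = 0"
    unfolding h2_inner_def h_def by (simp add: sums_iff)
qed

lemma model_space_blaschke3_eq: "model_space (blaschke3 a) = {tm_comb p1 p2 p3 | p1 p2 p3. True}"
proof
  show "{tm_comb p1 p2 p3 | p1 p2 p3. True} \<subseteq> model_space (blaschke3 a)"
    using tm_comb_in_model_space by auto
next
  show "model_space (blaschke3 a) \<subseteq> {tm_comb p1 p2 p3 | p1 p2 p3. True}"
  proof
    fix f assume f: "f \<in> model_space (blaschke3 a)"
    obtain d0 d1 d2 where d: "\<And>n. f n = d0 * kernel_seq a 0 n + d1 * kernel_seq a 1 n + d2 * kernel_seq a 2 n"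
      using model_space_blaschke3_kernel_span[OF a f] by blast
    define p3 where "p3 = d2 / (sqrt_delta a * (delta a)^2)"
    define p2 where "p2 = d1 / (sqrt_delta a * delta a) + 2 * a * p3"
    define p1 where "p1 = d0 / sqrt_delta a + a * p2 - a^2 * p3"
    have "f = tm_comb p1 p2 p3"
      using sqrt_delta_nonzero delta_nonzero
      by (simp add: fun_eq_iff d tm_comb_kernel_seq p1_def p2_def p3_def field_simps del: kernel_seq_0)
    then show "f \<in> {tm_comb p1 p2 p3 | p1 p2 p3. True}" by blast
  qed
qed

lemma orth_proj_model_space_blaschke3:
  assumes y: "y \<in> H2"
  shows "orth_proj (model_space (blaschke3 a)) y
           = tm_comb (h2_inner y (tm1 a)) (h2_inner y (tm2 a)) (h2_inner y (tm3 a))"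
  unfolding orth_proj_def
proof (rule the_equality)
  define b where "b = tm_comb (h2_inner y (tm1 a)) (h2_inner y (tm2 a)) (h2_inner y (tm3 a))"
  have "h2_inner (\<lambda>n. y n - b n) (tm_comb q1 q2 q3) = 0" for q1 q2 q3
    using y by (simp add: h2_inner_diff_left b_def h2_inner_tm_comb h2_inner_tm_comb_right)
  then show "b \<in> model_space (blaschke3 a) \<and> (\<forall>c\<in>model_space (blaschke3 a). h2_inner (\<lambda>n. y n - b n) c = 0)"
    unfolding model_space_blaschke3_eq b_def by auto
next
  fix b assume b: "b \<in> model_space (blaschke3 a) \<and> (\<forall>c\<in>model_space (blaschke3 a). h2_inner (\<lambda>n. y n - b n) c = 0)"
  then obtain q1 q2 q3 where bq: "b = tm_comb q1 q2 q3" unfolding model_space_blaschke3_eq by auto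
  have "h2_inner y (tm_comb r1 r2 r3) = h2_inner b (tm_comb r1 r2 r3)" for r1 r2 r3
  proof -
    have "h2_inner (\<lambda>n. y n - b n) (tm_comb r1 r2 r3) = 0"
      using b tm_comb_in_model_space by blast
    then show ?thesis using y by (simp add: h2_inner_diff_left bq)
  qed
  from this[of 1 0 0] this[of 0 1 0] this[of 0 0 1]
  show "b = tm_comb (h2_inner y (tm1 a)) (h2_inner y (tm2 a)) (h2_inner y (tm3 a))"
    by (simp add: bq h2_inner_tm_comb h2_inner_tm_comb_right y)
qed

lemma compressed_shift_blaschke3_inner:
  "h2_inner (compressed_shift (blaschke3 a) (tm_comb p1 p2 p3)) (tm_comb p1 p2 p3)
     = a * (p1 * cnj p1 + p2 * cnj p2 + p3 * cnj p3) + delta a * (p1 * cnj p2 + p2 * cnj p3)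
       - cnj a * delta a * p1 * cnj p3"
proof -
  define y where "y = shift (tm_comb p1 p2 p3)"
  have y: "y \<in> H2" unfolding y_def by auto
  have "h2_inner (compressed_shift (blaschke3 a) (tm_comb p1 p2 p3)) (tm_comb p1 p2 p3)
          = h2_inner y (tm_comb p1 p2 p3)"
    unfolding compressed_shift_def y_def[symmetric] orth_proj_model_space_blaschke3[OF y]
    by (simp add: h2_inner_tm_comb h2_inner_tm_comb_right[OF y] algebra_simps)
  also have "\<dots> = a * (p1 * cnj p1 + p2 * cnj p2 + p3 * cnj p3) + delta a * (p1 * cnj p2 + p2 * cnj p3)
                  - cnj a * delta a * p1 * cnj p3"
    unfolding y_def h2_inner_shift_tm_comb by (simp add: algebra_simps)
  finally show ?thesis .
qed

lemma h2_norm_tm_comb: "h2_norm (tm_comb p1 p2 p3) = sqrt ((cmod p1)^2 + (cmod p2)^2 + (cmod p3)^2)"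
proof -
  have "of_real ((h2_norm (tm_comb p1 p2 p3))^2) = p1 * cnj p1 + p2 * cnj p2 + p3 * cnj p3"
    using h2_inner_self[OF tm_comb_in_H2, of p1 p2 p3] h2_inner_tm_comb by simp
  also have "\<dots> = of_real ((cmod p1)^2 + (cmod p2)^2 + (cmod p3)^2)"
    by (simp only: complex_norm_square of_real_add)
  finally
  have "(h2_norm (tm_comb p1 p2 p3))^2 = (cmod p1)^2 + (cmod p2)^2 + (cmod p3)^2"
    by (simp only: of_real_eq_iff)
  moreover have "h2_norm (tm_comb p1 p2 p3) \<ge> 0"
    using tm_comb_in_H2 unfolding h2_norm_def H2_iff by (simp add: suminf_nonneg)
  ultimately show ?thesis by (metis real_sqrt_unique)
qed

end

section \<open>The extremal problem\<close>

lemma quadratic_form2_nonneg: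
  fixes s1 s2 s12 y z :: real
  assumes "0 \<le> s1" "0 \<le> s2" "0 \<le> s1 * s2 - s12^2"
  shows "0 \<le> s1 * y^2 + 2 * s12 * y * z + s2 * z^2"
proof (cases "s1 = 0")
  case True
  then have "s12 = 0" using assms(3) power2_less_eq_zero_iff[of s12] by simp
  then show ?thesis using True assms(2) by simp
next
  case False
  then have "s1 > 0" using assms(1) by simp
  moreover have "s1 * (s1 * y^2 + 2 * s12 * y * z + s2 * z^2) = (s1 * y + s12 * z)^2 + (s1 * s2 - s12^2) * z^2"
    by (simp add: power2_eq_square algebra_simps)
  ultimately show ?thesis using assms(3) by (metis add_nonneg_nonneg mult_nonneg_nonneg
        zero_le_mult_iff zero_le_power2 not_less)
qed

text \<open>Sylvester's criterion for a real symmetric \<open>3 \<times> 3\<close> matrix with positive pivot.\<close>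
lemma quadratic_form3_nonneg:
  fixes a b d e f g x y z :: real
  assumes "0 < a" "0 \<le> a * b - e^2" "0 \<le> a * d - g^2"
    "0 \<le> a * b * d + 2 * e * f * g - a * f^2 - b * g^2 - d * e^2"
  shows "0 \<le> a * x^2 + b * y^2 + d * z^2 + 2 * e * x * y + 2 * g * x * z + 2 * f * y * z"
proof -
  have "(a * b - e^2) * (a * d - g^2) - (a * f - e * g)^2
          = a * (a * b * d + 2 * e * f * g - a * f^2 - b * g^2 - d * e^2)"
    by (simp add: power2_eq_square algebra_simps)
  then have "0 \<le> (a * b - e^2) * y^2 + 2 * (a * f - e * g) * y * z + (a * d - g^2) * z^2"
    using assms by (intro quadratic_form2_nonneg) auto
  moreover have "a * (a * x^2 + b * y^2 + d * z^2 + 2 * e * x * y + 2 * g * x * z + 2 * f * y * z)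
     = (a * x + e * y + g * z)^2 + ((a * b - e^2) * y^2 + 2 * (a * f - e * g) * y * z + (a * d - g^2) * z^2)"
    by (simp add: power2_eq_square algebra_simps)
  ultimately show ?thesis using assms(1) by (metis add_nonneg_nonneg zero_le_mult_iff zero_le_power2 not_less)
qed

text \<open>The positive root of \<open>l\<^sup>2 + r * l = 2\<close>; the extremal vector is proportional to \<open>(l, 2, l)\<close>.\<close>
definition peak_root :: "real \<Rightarrow> real" where
  "peak_root r = (sqrt (r^2 + 8) - r) / 2"

lemma peak_root_eq: "(peak_root r)^2 + r * peak_root r = 2"
  using real_sqrt_pow2[of "r^2 + 8"] by (simp add: peak_root_def power2_eq_square field_simps)

lemma peak_root_ge_1:
  assumes "0 \<le> r" "r \<le> 1"
  shows "1 \<le> peak_root r"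
proof -
  have "(r + 2)^2 \<le> r^2 + 8" using assms by (simp add: power2_eq_square algebra_simps)
  then have "r + 2 \<le> sqrt (r^2 + 8)" using assms by (simp add: real_le_rsqrt)
  then show ?thesis by (simp add: peak_root_def)
qed

definition omega3 :: "real \<Rightarrow> real" where
  "omega3 r = r + (1 - r^2) * peak_root r / 2"

lemma omega3_nonneg:
  assumes "0 \<le> r" "r < 1"
  shows "0 \<le> omega3 r"
proof -
  have "0 \<le> 1 - r^2" using assms by (simp add: abs_square_le_1)
  then show ?thesis using assms peak_root_ge_1[of r] by (simp add: omega3_def)
qed

lemma omega3_closed_form:
  fixes r :: real
  assumes "0 \<le> r"
  shows "omega3 r = (7 * r - r^3 + (1 + r^2) * sqrt (r^2 + 8)) / (4 + 2 * r^2 + 2 * r * sqrt (r^2 + 8))"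
proof -
  define s where "s = sqrt (r^2 + 8)"
  have s: "s^2 = r^2 + 8" "0 \<le> s" unfolding s_def by simp_all
  have "(r + (1 - r^2) * ((s - r) / 2) / 2) * (4 + 2 * r^2 + 2 * r * s) - (7 * r - r^3 + (1 + r^2) * s)
     = (s^2 - r^2 - 8) * (2 * r - 2 * r^3) / 4"
    by (simp add: field_simps power2_eq_square power3_eq_cube)
  then have "omega3 r * (4 + 2 * r^2 + 2 * r * s) = 7 * r - r^3 + (1 + r^2) * s"
    using s(1) by (simp add: omega3_def peak_root_def s_def[symmetric])
  moreover have "0 < 4 + 2 * r^2 + 2 * r * s" using assms s(2) by (simp add: add_pos_nonneg)
  ultimately show ?thesis by (simp add: s_def field_simps)
qed

lemma rotated_form_minor_nonneg:
  fixes r l u :: real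
  assumes r: "0 \<le> r" "r < 1" and l: "l^2 + r * l = 2" "1 \<le> l" and u: "0 \<le> u" "u \<le> 2"
  defines "c \<equiv> 1 - r^2"
  shows "0 \<le> (c * l + 2 * r * u) * (c * l + 2 * r * u + c * (1 - u) * r) - 2 * c^2 * (1 - u)^2"
proof -
  define lin where "lin = 2 * r * c * (l + r) + c * l * r * (2 - c) + 4 * c^2"
  define quad where "quad = 2 * (r^2 * (2 - c) - c^2)"
  have "(c * l + 2 * r * u) * (c * l + 2 * r * u + c * (1 - u) * r) - 2 * c^2 * (1 - u)^2 - u * (lin + quad * u)
          = (l^2 + r * l - 2) * (1 - 2 * r^2 + r^4)"
    unfolding lin_def quad_def c_def by algebra
  then have eq: "(c * l + 2 * r * u) * (c * l + 2 * r * u + c * (1 - u) * r) - 2 * c^2 * (1 - u)^2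
                   = u * (lin + quad * u)"
    using l(1) by simp
  have c: "0 < c" "c \<le> 1" using r by (simp_all add: c_def abs_square_less_1)
  have "0 \<le> lin" unfolding lin_def using r l c by (intro add_nonneg_nonneg) auto
  moreover have "lin + 2 * quad = 2 * r * c * (l + r) + c * l * r * (2 - c) + 4 * r^2 * (2 - c)"
    unfolding lin_def quad_def by algebra
  then have "0 \<le> lin + 2 * quad" using r l c by (auto intro!: add_nonneg_nonneg)
  \<comment> \<open>\<open>lin + quad * u\<close> is affine in \<open>u\<close>, hence nonnegative on \<open>[0, 2]\<close>.\<close>
  moreover have "lin + quad * u = lin * (1 - u / 2) + (lin + 2 * quad) * (u / 2)"
    by (simp add: algebra_simps)
  moreover have "0 \<le> 1 - u / 2" "0 \<le> u / 2" using u by simp_all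
  ultimately have "0 \<le> lin + quad * u" by simp
  then show ?thesis unfolding eq using u by simp
qed

lemma rotated_form_det_nonneg:
  fixes r l u S :: real
  assumes r: "0 \<le> r" "r < 1" and l: "l^2 + r * l = 2" "1 \<le> l" and u: "0 \<le> u" and S: "S^2 = 2 * u - u^2"
  defines "c \<equiv> 1 - r^2" and "C \<equiv> 1 - u"
  defines "D \<equiv> r * u + c * l / 2"
  shows "0 \<le> (2 * D + c * C * r) * (4 * D) * (2 * D - c * C * r) + 2 * (- 2 * c * C) * (2 * c * S) * (- c * S * r)
            - (2 * D + c * C * r) * (2 * c * S)^2 - (4 * D) * (- c * S * r)^2 - (2 * D - c * C * r) * (- 2 * c * C)^2"
proof -
  have "(2 * D + c * C * r) * (4 * D) * (2 * D - c * C * r) + 2 * (- 2 * c * C) * (2 * c * S) * (- c * S * r)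
          - (2 * D + c * C * r) * (2 * c * S)^2 - (4 * D) * (- c * S * r)^2 - (2 * D - c * C * r) * (- 2 * c * C)^2
          - 2 * (c^2 * (2 * r * u) * (3 * l^2 - 3) + 3 * c * l * (2 * r * u)^2 + (2 * r * u)^3)
        = (S^2 - 2 * u + u^2) * (- 4 * l + 10 * l * r^2 - 6 * l * r^4 - 2 * l * r^6 + 2 * l * r^8 + 4 * r
            - 12 * r * u - 12 * r^3 + 24 * r^3 * u + 12 * r^5 - 12 * r^5 * u - 4 * r^7)
          + (l^2 + r * l - 2) * (2 * l - 6 * l * r^2 + 6 * l * r^4 - 2 * l * r^6 - 2 * r + 6 * r^3 - 6 * r^5 + 2 * r^7)"
    unfolding D_def c_def C_def by algebra
  moreover have "0 \<le> c" using r by (simp add: c_def abs_square_le_1)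
  moreover have "0 \<le> 3 * l^2 - 3" using l by (simp add: one_le_power)
  ultimately show ?thesis using S l r u by simp
qed

lemma rotated_form_nonneg:
  fixes r C S xp xq xt :: real
  assumes r: "0 \<le> r" "r < 1" and CS: "C^2 + S^2 = 1"
  defines "l \<equiv> peak_root r" and "c \<equiv> 1 - r^2"
  defines "D \<equiv> r * (1 - C) + c * l / 2"
  shows "0 \<le> (2 * D + c * C * r) * xp^2 + (4 * D) * xq^2 + (2 * D - c * C * r) * xt^2
              + 2 * (- 2 * c * C) * xp * xq + 2 * (- c * S * r) * xp * xt + 2 * (2 * c * S) * xq * xt"
proof -
  define u where "u = 1 - C"
  have l: "l^2 + r * l = 2" "1 \<le> l" using peak_root_eq peak_root_ge_1 r unfolding l_def by auto
  have c: "0 < c" "c \<le> 1" using r by (simp_all add: c_def abs_square_less_1)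
  have "\<bar>C\<bar> \<le> 1" using CS by (metis abs_square_le_1 le_add_same_cancel1 zero_le_power2)
  then have u: "0 \<le> u" "u \<le> 2" unfolding u_def by auto
  have C: "C = 1 - u" and S: "S^2 = 2 * u - u^2"
    using CS by (simp_all add: u_def power2_eq_square algebra_simps)
  have D: "D = r * u + c * l / 2" unfolding D_def u_def by simp
  show ?thesis
  proof (rule quadratic_form3_nonneg)
    have "2 * D + c * C * r = c * l + c * r + r * u * (2 - c)"
      unfolding D C by (simp add: algebra_simps)
    moreover have "0 < c * l" "0 \<le> c * r" "0 \<le> r * u * (2 - c)" using r l c u by auto
    ultimately show "0 < 2 * D + c * C * r" by linarith
    have "(2 * D + c * C * r) * (4 * D) - (- 2 * c * C)^2
            = 2 * ((c * l + 2 * r * u) * (c * l + 2 * r * u + c * (1 - u) * r) - 2 * c^2 * (1 - u)^2)"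
      unfolding D C by algebra
    also have "0 \<le> (c * l + 2 * r * u) * (c * l + 2 * r * u + c * (1 - u) * r) - 2 * c^2 * (1 - u)^2"
      unfolding c_def by (rule rotated_form_minor_nonneg[OF r l u])
    ultimately show "0 \<le> (2 * D + c * C * r) * (4 * D) - (- 2 * c * C)^2"
      by simp
    have "(2 * D + c * C * r) * (2 * D - c * C * r) - (- c * S * r)^2 = (2 * D)^2 - (c * r)^2"
      using CS by algebra
    moreover have "c * r \<le> c * l" using r l c by (simp add: mult_left_mono)
    then have "c * r \<le> 2 * D" unfolding D using r u by (simp add: add_increasing)
    moreover have "0 \<le> c * r" using r c by simp
    ultimately show "0 \<le> (2 * D + c * C * r) * (2 * D - c * C * r) - (- c * S * r)^2"
      using power_mono[of "c * r" "2 * D" 2] by simp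
    show "0 \<le> (2 * D + c * C * r) * (4 * D) * (2 * D - c * C * r) + 2 * (- 2 * c * C) * (2 * c * S) * (- c * S * r)
            - (2 * D + c * C * r) * (2 * c * S)^2 - (4 * D) * (- c * S * r)^2 - (2 * D - c * C * r) * (- 2 * c * C)^2"
      using rotated_form_det_nonneg[OF r l u(1) S] unfolding C D c_def .
  qed
qed

text \<open>Splitting \<open>y\<^sub>k\<close> into real and imaginary parts turns the hermitian form into two copies of the real
  form of \<open>rotated_form_nonneg\<close>.\<close>
lemma rotated_form_decomposition:
  fixes r c D :: real and y1 y2 y3 w :: complex
  defines "C \<equiv> Re w" and "S \<equiv> Im w"
  defines "n \<equiv> (cmod y1)^2 + (cmod y2)^2 + (cmod y3)^2"
  defines "P \<equiv> y1 * cnj y2 + y2 * cnj y3 - of_real r * y1 * cnj y3"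
  defines "F \<equiv> \<lambda>xp xq xt. (2 * D + c * C * r) * xp^2 + (4 * D) * xq^2 + (2 * D - c * C * r) * xt^2
              + 2 * (- 2 * c * C) * xp * xq + 2 * (- c * S * r) * xp * xt + 2 * (2 * c * S) * xq * xt"
  shows "4 * ((D + r * C) * n - Re (w * (of_real r * of_real n + of_real c * P)))
           = F (Re y1 + Re y3) (Re y2) (Im y1 - Im y3) + F (Im y1 + Im y3) (Im y2) (Re y3 - Re y1)"
  unfolding F_def C_def S_def n_def P_def cmod_power2
  by (simp add: algebra_simps power2_eq_square)

lemma Re_rotated_form_le:
  fixes r :: real and y1 y2 y3 w :: complex
  assumes r: "0 \<le> r" "r < 1" and w: "cmod w = 1"
  defines "n \<equiv> (cmod y1)^2 + (cmod y2)^2 + (cmod y3)^2"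
  defines "P \<equiv> y1 * cnj y2 + y2 * cnj y3 - of_real r * y1 * cnj y3"
  shows "Re (w * (of_real r * of_real n + of_real (1 - r^2) * P)) \<le> omega3 r * n"
proof -
  define l c C S where "l = peak_root r" and "c = 1 - r^2" and "C = Re w" and "S = Im w"
  define D where "D = r * (1 - C) + c * l / 2"
  have CS: "C^2 + S^2 = 1" using w unfolding C_def S_def by (simp add: cmod_power2[symmetric])
  define F where "F = (\<lambda>xp xq xt. (2 * D + c * C * r) * xp^2 + (4 * D) * xq^2 + (2 * D - c * C * r) * xt^2
              + 2 * (- 2 * c * C) * xp * xq + 2 * (- c * S * r) * xp * xt + 2 * (2 * c * S) * xq * xt)"
  from rotated_form_nonneg[OF r CS] have F: "0 \<le> F xp xq xt" for xp xq xt
    unfolding F_def D_def l_def c_def by simp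
  have "4 * ((D + r * C) * n - Re (w * (of_real r * of_real n + of_real c * P)))
          = F (Re y1 + Re y3) (Re y2) (Im y1 - Im y3) + F (Im y1 + Im y3) (Im y2) (Re y3 - Re y1)"
    unfolding F_def C_def S_def n_def P_def by (rule rotated_form_decomposition)
  then have "0 \<le> 4 * ((D + r * C) * n - Re (w * (of_real r * of_real n + of_real c * P)))"
    using F by simp
  moreover have "D + r * C = omega3 r" by (simp add: D_def omega3_def l_def c_def algebra_simps)
  ultimately show ?thesis by (simp add: c_def)
qed

lemma cmod_le_if_Re_rotations_le:
  assumes "\<And>v. cmod v = 1 \<Longrightarrow> Re (v * z) \<le> b"
  shows "cmod z \<le> b"
proof (cases "z = 0")
  case True
  then show ?thesis using assms[of 1] by simp
next
  case False
  define v where "v = cnj z / of_real (cmod z)"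
  have "cmod v = 1" using False by (simp add: v_def norm_divide)
  moreover have "v * z = of_real (cmod z)"
    using False complex_norm_square[of z] by (simp add: v_def power2_eq_square field_simps)
  ultimately show ?thesis using assms[of v] by simp
qed

text \<open>The form \<open>\<langle>S(\<phi>) f, f\<rangle>\<close> at \<open>f = tm_comb a p1 p2 p3\<close>.\<close>
definition Qform :: "complex \<Rightarrow> complex \<Rightarrow> complex \<Rightarrow> complex \<Rightarrow> complex" where
  "Qform a p1 p2 p3 = a * (p1 * cnj p1 + p2 * cnj p2 + p3 * cnj p3) + delta a * (p1 * cnj p2 + p2 * cnj p3)
      - cnj a * delta a * p1 * cnj p3"

text \<open>Substituting \<open>y\<^sub>k = p\<^sub>k w\<^sup>k\<close> reduces \<open>a = r w\<close> to the real case \<open>a = r\<close>.\<close>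
lemma Qform_rotate:
  fixes r :: real and w :: complex
  assumes "cmod w = 1"
  shows "Qform (of_real r * w) p1 p2 p3
           = w * (of_real r * (p1 * cnj p1 + p2 * cnj p2 + p3 * cnj p3)
               + of_real (1 - r^2) * ((p1 * w) * cnj (p2 * w^2) + (p2 * w^2) * cnj (p3 * w^3)
                                      - of_real r * (p1 * w) * cnj (p3 * w^3)))"
proof -
  have w: "w * cnj w = 1" using assms complex_norm_square[of w] by simp
  have d: "delta (of_real r * w) = of_real (1 - r^2)" using assms by (simp add: delta_def norm_mult)
  show ?thesis unfolding Qform_def d
    by (simp only: complex_cnj_mult complex_cnj_power complex_cnj_complex_of_real) (use w in algebra)
qed

lemma sum_mult_cnj_eq_sum_norm_sq:
  "p1 * cnj p1 + p2 * cnj p2 + p3 * cnj p3 = of_real ((cmod p1)^2 + (cmod p2)^2 + (cmod p3)^2)"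
  by (simp only: complex_norm_square of_real_add)

lemma Qform_bound:
  assumes a: "cmod a < 1" and p: "(cmod p1)^2 + (cmod p2)^2 + (cmod p3)^2 = 1"
  shows "cmod (Qform a p1 p2 p3) \<le> omega3 (cmod a)"
proof -
  define r w where "r = cmod a" and "w = cis (Arg a)"
  define y1 y2 y3 where "y1 = p1 * w" and "y2 = p2 * w^2" and "y3 = p3 * w^3"
  have r: "0 \<le> r" "r < 1" and w: "cmod w = 1" and aw: "a = of_real r * w"
    using a rcis_cmod_Arg[of a] by (simp_all add: r_def w_def rcis_def)
  have y: "(cmod y1)^2 + (cmod y2)^2 + (cmod y3)^2 = 1"
    using p w by (simp add: y1_def y2_def y3_def norm_mult norm_power)
  define Z where "Z = of_real r * of_real ((cmod y1)^2 + (cmod y2)^2 + (cmod y3)^2)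
                       + of_real (1 - r^2) * (y1 * cnj y2 + y2 * cnj y3 - of_real r * y1 * cnj y3)"
  have "Qform a p1 p2 p3 = w * Z"
    unfolding Z_def y unfolding aw Qform_rotate[OF w] y1_def y2_def y3_def sum_mult_cnj_eq_sum_norm_sq p
    by simp
  then have "cmod (Qform a p1 p2 p3) = cmod Z" using w by (simp add: norm_mult)
  also have "\<dots> \<le> omega3 r"
    using Re_rotated_form_le[OF r, of _ y1 y2 y3] unfolding Z_def y
    by (intro cmod_le_if_Re_rotations_le) simp
  finally show ?thesis unfolding r_def .
qed

lemma peak_vector:
  fixes r :: real
  assumes "0 \<le> r" "r \<le> 1"
  defines "l \<equiv> peak_root r"
  defines "N \<equiv> sqrt (2 * l^2 + 4)"
  shows "(l / N)^2 + (2 / N)^2 + (l / N)^2 = 1"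
    and "l / N * (2 / N) + 2 / N * (l / N) - r * (l / N) * (l / N) = l / 2"
proof -
  have N: "0 < 2 * l^2 + 4" using zero_le_power2[of l] by linarith
  then have N2: "N^2 = 2 * l^2 + 4" unfolding N_def by simp
  have "(l / N)^2 + (2 / N)^2 + (l / N)^2 = (2 * l^2 + 4) / N^2"
    by (simp add: power_divide add_divide_distrib)
  then show "(l / N)^2 + (2 / N)^2 + (l / N)^2 = 1" using N N2 by simp
  have "4 * l - r * l^2 - l * (l^2 + 2) = - l * (l^2 + r * l - 2)"
    by algebra
  then have "4 * l - r * l^2 = l * (l^2 + 2)"
    using peak_root_eq[of r] unfolding l_def by simp
  have "N \<noteq> 0" unfolding N_def using N by simp
  then have "l / N * (2 / N) + 2 / N * (l / N) - r * (l / N) * (l / N) = (4 * l - r * l^2) / N^2"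
    by (simp add: field_simps power2_eq_square)
  also have "\<dots> = l * (l^2 + 2) / (2 * (l^2 + 2))"
    using \<open>4 * l - r * l^2 = l * (l^2 + 2)\<close> N2 by simp
  also have "\<dots> = l / 2"
    using N by (simp add: field_simps)
  finally show "l / N * (2 / N) + 2 / N * (l / N) - r * (l / N) * (l / N) = l / 2" .
qed

lemma Qform_attains_omega3:
  assumes a: "cmod a < 1"
  obtains p1 p2 p3 where "(cmod p1)^2 + (cmod p2)^2 + (cmod p3)^2 = 1"
    and "cmod (Qform a p1 p2 p3) = omega3 (cmod a)"
proof -
  define r w where "r = cmod a" and "w = cis (Arg a)"
  have r: "0 \<le> r" "r < 1" and w: "cmod w = 1" "w * cnj w = 1" and aw: "a = of_real r * w"
    using a rcis_cmod_Arg[of a] by (simp_all add: r_def w_def rcis_def cis_cnj cis_mult)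
  define l N where "l = peak_root r" and "N = sqrt (2 * l^2 + 4)"
  define p1 p2 p3 where "p1 = of_real (l / N) * cnj w" and "p2 = of_real (2 / N) * cnj w ^ 2"
    and "p3 = of_real (l / N) * cnj w ^ 3"
  have p: "(cmod p1)^2 + (cmod p2)^2 + (cmod p3)^2 = 1"
    using peak_vector(1)[of r] r w peak_root_ge_1[of r]
    by (simp add: p1_def p2_def p3_def norm_mult norm_power power2_abs l_def N_def del: of_real_divide)
  have "p1 * w = of_real (l / N)" "p2 * w^2 = of_real (2 / N)" "p3 * w^3 = of_real (l / N)"
    using w(2) by (simp_all add: p1_def p2_def p3_def power_mult_distrib[symmetric] mult.assoc
        mult.commute[of "cnj w"])
  then have "Qform a p1 p2 p3 = w * of_real (r + (1 - r^2) * (l / N * (2 / N) + 2 / N * (l / N)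
                                                             - r * (l / N) * (l / N)))"
    unfolding aw Qform_rotate[OF w(1)] sum_mult_cnj_eq_sum_norm_sq p by simp
  also have "\<dots> = w * of_real (omega3 r)"
  proof -
    have "l / N * (2 / N) + 2 / N * (l / N) - r * (l / N) * (l / N) = l / 2"
      using peak_vector(2)[of r] r unfolding l_def N_def by simp
    then show ?thesis unfolding omega3_def l_def[symmetric] by (simp only: times_divide_eq_right)
  qed
  finally have "cmod (Qform a p1 p2 p3) = omega3 (cmod a)"
    using omega3_nonneg[OF r] w(1) by (simp add: norm_mult r_def)
  with p show ?thesis by (rule that)
qed

lemma numerical_range_blaschke3:
  assumes a: "cmod a < 1"
  shows "{cmod (h2_inner (compressed_shift (blaschke3 a) f) f) | f. f \<in> model_space (blaschke3 a) \<and> h2_norm f = 1}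
       = {cmod (Qform a p1 p2 p3) | p1 p2 p3. (cmod p1)^2 + (cmod p2)^2 + (cmod p3)^2 = 1}"
    (is "?range = ?Qrange")
proof (intro set_eqI iffI)
  fix x assume "x \<in> ?range"
  then obtain p1 p2 p3 where "(cmod p1)^2 + (cmod p2)^2 + (cmod p3)^2 = 1"
    and "x = cmod (h2_inner (compressed_shift (blaschke3 a) (tm_comb a p1 p2 p3)) (tm_comb a p1 p2 p3))"
    unfolding model_space_blaschke3_eq[OF a] by (auto simp: h2_norm_tm_comb[OF a])
  then show "x \<in> ?Qrange" unfolding compressed_shift_blaschke3_inner[OF a] Qform_def by blast
next
  fix x assume "x \<in> ?Qrange"
  then obtain p1 p2 p3 where "(cmod p1)^2 + (cmod p2)^2 + (cmod p3)^2 = 1" and "x = cmod (Qform a p1 p2 p3)"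
    by blast
  moreover have "tm_comb a p1 p2 p3 \<in> model_space (blaschke3 a)" by (rule tm_comb_in_model_space[OF a])
  ultimately show "x \<in> ?range"
    unfolding Qform_def compressed_shift_blaschke3_inner[OF a, symmetric]
    by (force simp: h2_norm_tm_comb[OF a])
qed

lemma Sup_Qform_sphere:
  assumes a: "cmod a < 1"
  shows "Sup {cmod (Qform a p1 p2 p3) | p1 p2 p3. (cmod p1)^2 + (cmod p2)^2 + (cmod p3)^2 = 1}
           = omega3 (cmod a)"
proof (rule cSup_eq_maximum)
  obtain p1 p2 p3 where "(cmod p1)^2 + (cmod p2)^2 + (cmod p3)^2 = 1"
    and "cmod (Qform a p1 p2 p3) = omega3 (cmod a)"
    using Qform_attains_omega3[OF a] .
  then show "omega3 (cmod a) \<in> {cmod (Qform a p1 p2 p3) | p1 p2 p3. (cmod p1)^2 + (cmod p2)^2 + (cmod p3)^2 = 1}"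
    by force
qed (use Qform_bound[OF a] in blast)

theorem mainTheorem11:
  fixes \<alpha> :: complex and \<phi> :: "complex \<Rightarrow> complex"
  assumes "cmod \<alpha> < 1"
    and "\<phi> = (\<lambda>z. ((z - \<alpha>) / (1 - cnj \<alpha> * z)) ^ 3)"
  shows "numerical_radius (compressed_shift \<phi>) (model_space \<phi>) =
    (7 * cmod \<alpha> - cmod \<alpha> ^ 3 + (1 + cmod \<alpha> ^ 2) * sqrt (cmod \<alpha> ^ 2 + 8)) /
    (4 + 2 * cmod \<alpha> ^ 2 + 2 * cmod \<alpha> * sqrt (cmod \<alpha> ^ 2 + 8))"
proof -
  have \<phi>: "\<phi> = blaschke3 \<alpha>" using assms(2) by (simp add: blaschke3_def fun_eq_iff)
  have "numerical_radius (compressed_shift \<phi>) (model_space \<phi>) = omega3 (cmod \<alpha>)"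
    unfolding \<phi> numerical_radius_def numerical_range_blaschke3[OF assms(1)]
    by (rule Sup_Qform_sphere[OF assms(1)])
  then show ?thesis using omega3_closed_form[of "cmod \<alpha>"] by simp
qed

end
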